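(* Let $K=\{(z_1,z_2)\in\mathbb C^2:|z_1|^2+|z_2|^2\le1\}$ be the closed Euclidean unit ball. Then $\tau^-(K)=1/\sqrt2$, $c(K)=1/\sqrt2$ and $C(K)=1$. Moreover, for every multi-index $\alpha(i)=(N,N)$ with $N\ge1$, one has $\inf\{\|P\|_K:P\in\mathcal P(\alpha(i))\}=2^{-N}$, so that $W_{\infty,\alpha(i)}(K,1)=1$.
   Context: Monomials $z^\alpha=z_1^{\alpha_1}\cdots z_n^{\alpha_n}$, $\alpha\in\mathbb N_0^n$, are enumerated as $e_0=1,e_1,e_2,\dots$ with $e_i=z^{\alpha(i)}$. The enumeration is such that $|\alpha(i)|=\alpha_1+\dots+\alpha_n$ is non-decreasing in $i$. Among multi-indices of equal length it is ordered lexicographically: for $|\alpha|=|\beta|$, $\beta\prec\alpha$ iff for some $l$ one has $\alpha_l<\beta_l$ and $\alpha_k=\beta_k$ for all $k<l$. $\mathcal P(\alpha(i))$ denotes the set of polynomials of the form $e_i+\sum_{j<i}c_je_j$ with $c_j\in\mathbb C$. For compact $K\subset\mathbb C^n$, $\|\cdot\|_K$ denotes the sup norm on $K$. Set $t_i(K)=\inf\{\|P\|_K:P\in\mathcal P(\alpha(i))\}$ and $\tau^-(K)=\liminf_{i\to\infty} t_i(K)^{1/|\alpha(i)|}$. For compact $K\subset\mathbb C^n$, let $V_K(z)=\sup\{u(z): u\text{ plurisubharmonic on }\mathbb C^n,\ u(z)\le\log|z|+O(1),\ u\le0\text{ on }K\}$ and let $V_K^*$ be its upper semicontinuous regularization.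 With $|z|=(\sum|z_\nu|^2)^{1/2}$ and $\|z\|=\max_\nu|z_\nu|$, define $c(K)=\exp[-\limsup_{z\to\infty}(V_K^*(z)-\log\|z\|)]$ and $C(K)=\exp[-\limsup_{z\to\infty}(V_K^*(z)-\log|z|)]$. For a bounded upper semicontinuous $\widehat w\ge0$ on $K$ whose positivity set is non-pluripolar, the sup-norm Widom factor is $W_{\infty,\alpha(i)}(K,\widehat w)=\inf\{\|\widehat w P\|_K:P\in\mathcal P(\alpha(i))\}/[\tau^-(K)]^{|\alpha(i)|}$; here $\widehat w\equiv1$. *)

theory Defs
  imports "HOL-Analysis.Analysis" "HOL-Library.Liminf_Limsup"
begin

text \<open>Points of C^2 are pairs; the library norm on complex \<times> complex is the Euclidean one
  |z| = sqrt(|z1|^2+|z2|^2).  Multi-indices in N_0^2 are pairs of naturals.\<close>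

type_synonym pt = "complex \<times> complex"

definition maxnorm :: "pt \<Rightarrow> real" where
  "maxnorm z = max (cmod (fst z)) (cmod (snd z))"

definition mlen :: "nat \<times> nat \<Rightarrow> nat" where
  "mlen a = fst a + snd a"

definition mi_less :: "nat \<times> nat \<Rightarrow> nat \<times> nat \<Rightarrow> bool" where
  "mi_less b a \<longleftrightarrow> mlen b < mlen a \<or>
     (mlen b = mlen a \<and> (fst a < fst b \<or> (fst a = fst b \<and> snd a < snd b)))"

definition alpha :: "nat \<Rightarrow> nat \<times> nat" where
  "alpha i = (THE b. card {g. mi_less g b} = i)"

definition deg :: "nat \<Rightarrow> nat" where
  "deg i = mlen (alpha i)"

definition monom :: "nat \<times> nat \<Rightarrow> pt \<Rightarrow> complex" where
  "monom a z = fst z ^ fst a * snd z ^ snd a"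

text \<open>The element e_i + sum_{j<i} c_j e_j of P(alpha(i)).\<close>
definition Ppoly :: "nat \<Rightarrow> (nat \<Rightarrow> complex) \<Rightarrow> pt \<Rightarrow> complex" where
  "Ppoly i c z = monom (alpha i) z + (\<Sum>j<i. c j * monom (alpha j) z)"

definition supnorm :: "pt set \<Rightarrow> (pt \<Rightarrow> real) \<Rightarrow> real" where
  "supnorm K f = Sup ((\<lambda>z. \<bar>f z\<bar>) ` K)"

definition t_weighted :: "pt set \<Rightarrow> (pt \<Rightarrow> real) \<Rightarrow> nat \<Rightarrow> real" where
  "t_weighted K w i = Inf {supnorm K (\<lambda>z. w z * cmod (Ppoly i c z)) | c. True}"

definition t_cheb :: "pt set \<Rightarrow> nat \<Rightarrow> real" where
  "t_cheb K i = Inf {supnorm K (\<lambda>z. cmod (Ppoly i c z)) | c. True}"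

definition tau_minus :: "pt set \<Rightarrow> ereal" where
  "tau_minus K = liminf (\<lambda>i. ereal (t_cheb K i powr (1 / real (deg i))))"

definition widom_inf :: "pt set \<Rightarrow> (pt \<Rightarrow> real) \<Rightarrow> nat \<Rightarrow> real" where
  "widom_inf K w i = t_weighted K w i / (real_of_ereal (tau_minus K)) ^ deg i"

text \<open>Plurisubharmonic functions on C^2 (values in [-infinity, infinity)):
  upper semicontinuous and subharmonic on every complex line, i.e. the sub-mean value
  inequality u(a) <= (1/2pi) int_0^{2pi} u(a + e^{i theta} b) d theta holds for all a, b.
  The integral of an (usc, hence bounded above on the circle) extended-real function is
  taken as int u^+ - int u^-.\<close>

definition usc :: "(pt \<Rightarrow> ereal) \<Rightarrow> bool" where
  "usc u \<longleftrightarrow> (\<forall>x. Limsup (at x) u \<le> u x)"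

definition circ_pt :: "pt \<Rightarrow> pt \<Rightarrow> real \<Rightarrow> pt" where
  "circ_pt a b \<theta> = (fst a + cis \<theta> * fst b, snd a + cis \<theta> * snd b)"

definition circ_mean :: "(pt \<Rightarrow> ereal) \<Rightarrow> pt \<Rightarrow> pt \<Rightarrow> ereal" where
  "circ_mean u a b =
     (enn2ereal (\<integral>\<^sup>+ \<theta>. e2ennreal (max 0 (u (circ_pt a b \<theta>))) * indicator {0..2*pi} \<theta> \<partial>lborel)
    - enn2ereal (\<integral>\<^sup>+ \<theta>. e2ennreal (max 0 (- u (circ_pt a b \<theta>))) * indicator {0..2*pi} \<theta> \<partial>lborel))
    / ereal (2 * pi)"

definition psh :: "(pt \<Rightarrow> ereal) \<Rightarrow> bool" where
  "psh u \<longleftrightarrow> usc u \<and> (\<forall>z. u z < \<infinity>) \<and> (\<forall>a b. u a \<le> circ_mean u a b)"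

definition V_ext :: "pt set \<Rightarrow> pt \<Rightarrow> ereal" where
  "V_ext K z = Sup {u z | u. psh u
      \<and> (\<exists>C R. \<forall>w. norm w \<ge> R \<longrightarrow> u w \<le> ereal (ln (norm w) + C))
      \<and> (\<forall>w\<in>K. u w \<le> 0)}"

definition usc_reg :: "(pt \<Rightarrow> ereal) \<Rightarrow> pt \<Rightarrow> ereal" where
  "usc_reg f z = max (f z) (Limsup (at z) f)"

definition exp_neg_ereal :: "ereal \<Rightarrow> ereal" where
  "exp_neg_ereal L = (if L = \<infinity> then 0 else if L = -\<infinity> then \<infinity> else ereal (exp (- real_of_ereal L)))"

definition cap_c :: "pt set \<Rightarrow> ereal" where
  "cap_c K = exp_neg_ereal
     (Limsup at_infinity (\<lambda>z. usc_reg (V_ext K) z - ereal (ln (maxnorm z))))"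

definition cap_C :: "pt set \<Rightarrow> ereal" where
  "cap_C K = exp_neg_ereal
     (Limsup at_infinity (\<lambda>z. usc_reg (V_ext K) z - ereal (ln (norm z))))"

end

theory Submission
  imports Defs "HOL-Complex_Analysis.Complex_Analysis"
begin

(* For the closed unit ball K the extremal function is V_K(z) = log+ |z|.  From below,
   w |-> log+ (|<w, z>| / |z|) is a competitor: it is plurisubharmonic because log+ of the modulus
   of an affine function of one variable satisfies the sub-mean value inequality (Jensen), it is
   nonpositive on K and grows like log |w|.  From above, a competitor restricted to the complex
   line through z is subharmonic, nonpositive on the unit circle and at most c log rho on a large
   circle, so the maximum principle on the annulus gives u(z) <= log |z|.  Hence C(K) = 1, and
   c(K) = 1/sqrt 2 since |z| <= sqrt 2 ||z||, with equality on the diagonal.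

   For the Chebyshev constants, averaging P in P(alpha) over the roots of unity in each variable
   isolates the leading monomial, so ||z^alpha||_K <= ||P||_K and t_i(K) = ||z^alpha(i)||_K.  This
   is at least 2^(-|alpha|/2) (at the point (1,1)/sqrt 2) and equals 2^(-N) for alpha = (N,N)
   (AM-GM), which gives tau^-(K) = 1/sqrt 2 along the diagonal indices. *)

section \<open>Circle means\<close>

lemma holomorphic_circle_mean_Re:
  assumes "open S" "cball 0 1 \<subseteq> S" and "f holomorphic_on S"
  shows "((\<lambda>\<theta>. Re (f (cis \<theta>))) has_integral (2*pi * Re (f 0))) {0..2*pi}"
proof -
  have "((\<lambda>u. f u / (u - 0)) has_contour_integral (2 * of_real pi * \<i> * f 0)) (circlepath 0 1)"
  proof (rule Cauchy_integral_circlepath)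
    show "continuous_on (cball 0 1) f"
      using assms holomorphic_on_imp_continuous_on holomorphic_on_subset by blast
    show "f holomorphic_on ball 0 1"
      using assms holomorphic_on_subset ball_subset_cball by blast
  qed auto
  then have "((\<lambda>t. f (0 + complex_of_real 1 * cis t) / (0 + complex_of_real 1 * cis t - 0)
      * complex_of_real 1 * \<i> * cis t) has_integral (2 * of_real pi * \<i> * f 0)) {0..2*pi}"
    unfolding circlepath_def by (subst (asm) has_contour_integral_part_circlepath_iff) auto
  then have "((\<lambda>t. f (cis t) * \<i>) has_integral (2 * of_real pi * \<i> * f 0)) {0..2*pi}"
    by (rule has_integral_eq[rotated]) simp
  from has_integral_Re[OF has_integral_mult_right[OF this, of "-\<i>"]] show ?thesis
    by (simp add: algebra_simps)
qed

lemma norm_add_cis_mult_neq_0: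
  assumes "cmod \<beta> < cmod \<alpha>"
  shows "\<alpha> + cis \<theta> * \<beta> \<noteq> 0"
proof
  assume "\<alpha> + cis \<theta> * \<beta> = 0"
  then have "cmod \<alpha> = cmod (cis \<theta> * \<beta>)"
    by (metis add.inverse_unique norm_minus_cancel)
  with assms show False by (simp add: norm_mult)
qed

text \<open>Jensen's formula in the zero-free case: \<open>\<theta> \<mapsto> ln \<bar>\<alpha> + e^{i\<theta>} \<beta>\<bar>\<close> is the real part
  of the holomorphic function \<open>\<zeta> \<mapsto> ln \<bar>\<alpha>\<bar> + Ln (1 + \<zeta> \<beta> / \<alpha>)\<close> on the circle.\<close>
lemma circle_mean_ln_norm:
  fixes \<alpha> \<beta> :: complex
  assumes "cmod \<beta> < cmod \<alpha>"
  shows "((\<lambda>\<theta>. ln (cmod (\<alpha> + cis \<theta> * \<beta>))) has_integral (2*pi * ln (cmod \<alpha>))) {0..2*pi}"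
proof -
  define t where "t = \<beta> / \<alpha>"
  have \<alpha>: "\<alpha> \<noteq> 0" using assms by auto
  have t: "cmod t < 1" using assms \<alpha> by (simp add: t_def norm_divide field_simps)
  define S where "S = {\<zeta>. cmod \<zeta> * cmod t < 1}"
  define f where "f \<zeta> = of_real (ln (cmod \<alpha>)) + Ln (1 + \<zeta> * t)" for \<zeta>
  have "open S" unfolding S_def by (intro open_Collect_less continuous_intros)
  have "cball 0 1 \<subseteq> S" using t unfolding S_def
    by (auto simp: mult_le_cancel_right1 intro: le_less_trans[OF mult_right_mono])
  have Re_pos: "0 < Re (1 + \<zeta> * t)" if "\<zeta> \<in> S" for \<zeta>
  proof -
    have "\<bar>Re (\<zeta> * t)\<bar> \<le> cmod (\<zeta> * t)" by (rule abs_Re_le_cmod)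
    also have "\<dots> < 1" using that by (simp add: S_def norm_mult)
    finally show ?thesis by simp
  qed
  have hol: "f holomorphic_on S" unfolding f_def
  proof (intro holomorphic_intros)
    show "1 + z * t \<notin> \<real>\<^sub>\<le>\<^sub>0" if "z \<in> S" for z
      using Re_pos[OF that] by (auto simp: complex_nonpos_Reals_iff)
  qed
  have on_circle: "Re (f (cis \<theta>)) = ln (cmod (\<alpha> + cis \<theta> * \<beta>))" for \<theta>
  proof -
    have "cmod (1 + cis \<theta> * t) \<noteq> 0"
      using norm_add_cis_mult_neq_0[of t 1 \<theta>] t by simp
    moreover have "cmod \<alpha> * cmod (1 + cis \<theta> * t) = cmod (\<alpha> + cis \<theta> * \<beta>)"
      using \<alpha> by (simp add: t_def norm_mult[symmetric] algebra_simps)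
    moreover have "ln (cmod \<alpha> * cmod (1 + cis \<theta> * t)) = ln (cmod \<alpha>) + ln (cmod (1 + cis \<theta> * t))"
      by (rule ln_mult_pos) (use calculation \<alpha> in auto)
    ultimately show ?thesis
      using \<alpha> by (simp add: f_def)
  qed
  have "Re (f 0) = ln (cmod \<alpha>)" by (simp add: f_def)
  with holomorphic_circle_mean_Re[OF \<open>open S\<close> \<open>cball 0 1 \<subseteq> S\<close> hol] on_circle
  show ?thesis by simp
qed

lemma circle_mean_norm_square:
  fixes a :: complex and r :: real
  shows "((\<lambda>\<theta>. (cmod (a + r * cis \<theta>))^2) has_integral (2*pi * ((cmod a)^2 + r^2))) {0..2*pi}"
proof -
  define f where "f \<zeta> = of_real ((cmod a)^2 + r^2) + 2 * cnj a * r * \<zeta>" for \<zeta>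
  have "f holomorphic_on UNIV" unfolding f_def by (intro holomorphic_intros)
  moreover have "Re (f (cis \<theta>)) = (cmod (a + r * cis \<theta>))^2" for \<theta>
  proof -
    have "(cmod (a + r * cis \<theta>))^2 = (Re a + r * cos \<theta>)^2 + (Im a + r * sin \<theta>)^2"
      by (simp add: cmod_power2)
    also have "\<dots> = (Re a)^2 + (Im a)^2 + r^2 * ((sin \<theta>)^2 + (cos \<theta>)^2)
        + 2 * r * (Re a * cos \<theta> + Im a * sin \<theta>)"
      by algebra
    also have "\<dots> = Re (f (cis \<theta>))"
      by (simp add: f_def cmod_power2 algebra_simps)
    finally show ?thesis by simp
  qed
  ultimately show ?thesis
    using holomorphic_circle_mean_Re[OF open_UNIV, of f] by (simp add: f_def)
qed

definition angle_mean :: "(real \<Rightarrow> ereal) \<Rightarrow> ereal" where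
  "angle_mean g =
     (enn2ereal (\<integral>\<^sup>+ \<theta>. e2ennreal (max 0 (g \<theta>)) * indicator {0..2*pi} \<theta> \<partial>lborel)
    - enn2ereal (\<integral>\<^sup>+ \<theta>. e2ennreal (max 0 (- g \<theta>)) * indicator {0..2*pi} \<theta> \<partial>lborel))
    / ereal (2 * pi)"

lemma circ_mean_eq_angle_mean: "circ_mean u a b = angle_mean (\<lambda>\<theta>. u (circ_pt a b \<theta>))"
  by (simp add: circ_mean_def angle_mean_def)

lemma nn_integral_indicator_mono:
  assumes "\<And>\<theta>. \<theta> \<in> {0..2*pi} \<Longrightarrow> g \<theta> \<le> g' \<theta>"
  shows "enn2ereal (\<integral>\<^sup>+ \<theta>. e2ennreal (max 0 (g \<theta>)) * indicator {0..2*pi} \<theta> \<partial>lborel)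
       \<le> enn2ereal (\<integral>\<^sup>+ \<theta>. e2ennreal (max 0 (g' \<theta>)) * indicator {0..2*pi} \<theta> \<partial>lborel)"
  unfolding less_eq_ennreal.rep_eq[symmetric]
  by (intro nn_integral_mono) (auto simp: indicator_def intro!: e2ennreal_mono max.mono assms)

lemma angle_mean_mono:
  assumes "\<And>\<theta>. \<theta> \<in> {0..2*pi} \<Longrightarrow> g \<theta> \<le> g' \<theta>"
  shows "angle_mean g \<le> angle_mean g'"
  unfolding angle_mean_def
  by (intro ereal_divide_right_mono ereal_minus_mono nn_integral_indicator_mono)
     (use assms in auto)

lemma nn_integral_pos_part_eq_integral:
  assumes "continuous_on {0..2*pi} G"
  shows "enn2ereal (\<integral>\<^sup>+ \<theta>. e2ennreal (max 0 (ereal (G \<theta>))) * indicator {0..2*pi} \<theta> \<partial>lborel)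
       = ereal (integral {0..2*pi} (\<lambda>\<theta>. max 0 (G \<theta>)))"
proof -
  have c: "continuous_on {0..2*pi} (\<lambda>\<theta>. max 0 (G \<theta>))"
    using assms by (intro continuous_intros)
  have "(\<integral>\<^sup>+ \<theta>. e2ennreal (max 0 (ereal (G \<theta>))) * indicator {0..2*pi} \<theta> \<partial>lborel)
      = (\<integral>\<^sup>+ \<theta>. ennreal (indicator {0..2*pi} \<theta> * max 0 (G \<theta>)) \<partial>lborel)"
    by (intro nn_integral_cong) (auto simp: indicator_def max_def e2ennreal_neg)
  also have "\<dots> = ennreal (integral {0..2*pi} (\<lambda>\<theta>. max 0 (G \<theta>)))"
    by (rule nn_integral_has_integral_lebesgue)
       (use integrable_continuous_interval[OF c] in \<open>auto simp: has_integral_integral\<close>)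
  finally show ?thesis
    by (simp add: integral_nonneg[OF integrable_continuous_interval[OF c]])
qed

lemma angle_mean_continuous:
  assumes "continuous_on {0..2*pi} F"
  shows "angle_mean (\<lambda>\<theta>. ereal (F \<theta>)) = ereal (integral {0..2*pi} F / (2*pi))"
proof -
  have neg: "continuous_on {0..2*pi} (\<lambda>\<theta>. - F \<theta>)"
    using assms by (intro continuous_intros)
  have "(\<lambda>\<theta>. max 0 (F \<theta>)) integrable_on {0..2*pi}"
    using assms by (intro integrable_continuous_interval continuous_intros)
  moreover have "(\<lambda>\<theta>. max 0 (- F \<theta>)) integrable_on {0..2*pi}"
    using assms by (intro integrable_continuous_interval continuous_intros)
  ultimately have "integral {0..2*pi} (\<lambda>\<theta>. max 0 (F \<theta>)) - integral {0..2*pi} (\<lambda>\<theta>. max 0 (- F \<theta>))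
     = integral {0..2*pi} (\<lambda>\<theta>. max 0 (F \<theta>) - max 0 (- F \<theta>))"
    by (rule integral_diff[symmetric])
  also have "(\<lambda>\<theta>. max 0 (F \<theta>) - max 0 (- F \<theta>)) = F" by (auto simp: max_def)
  finally have parts: "integral {0..2*pi} (\<lambda>\<theta>. max 0 (F \<theta>))
      - integral {0..2*pi} (\<lambda>\<theta>. max 0 (- F \<theta>)) = integral {0..2*pi} F" .
  have "enn2ereal (\<integral>\<^sup>+ \<theta>. e2ennreal (max 0 (- ereal (F \<theta>))) * indicator {0..2*pi} \<theta> \<partial>lborel)
      = ereal (integral {0..2*pi} (\<lambda>\<theta>. max 0 (- F \<theta>)))"
    using nn_integral_pos_part_eq_integral[OF neg] by simp
  then show ?thesis
    unfolding angle_mean_def nn_integral_pos_part_eq_integral[OF assms]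
    using parts by simp
qed

lemma circ_mean_le_integral:
  assumes "continuous_on {0..2*pi} F"
    and "\<And>\<theta>. \<theta> \<in> {0..2*pi} \<Longrightarrow> u (circ_pt a b \<theta>) \<le> ereal (F \<theta>)"
  shows "circ_mean u a b \<le> ereal (integral {0..2*pi} F / (2*pi))"
  unfolding circ_mean_eq_angle_mean angle_mean_continuous[OF assms(1), symmetric]
  by (rule angle_mean_mono) (rule assms(2))

lemma integral_le_circ_mean:
  assumes "continuous_on {0..2*pi} F"
    and "\<And>\<theta>. \<theta> \<in> {0..2*pi} \<Longrightarrow> ereal (F \<theta>) \<le> u (circ_pt a b \<theta>)"
  shows "ereal (integral {0..2*pi} F / (2*pi)) \<le> circ_mean u a b"
  unfolding circ_mean_eq_angle_mean angle_mean_continuous[OF assms(1), symmetric]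
  by (rule angle_mean_mono) (rule assms(2))

section \<open>The sub-mean value inequality for \<open>ln\<^sup>+\<close> of an affine function\<close>

definition ln_plus :: "real \<Rightarrow> real" where
  "ln_plus x = ln (max 1 x)"

lemma ln_plus_nonneg: "0 \<le> ln_plus x"
  by (simp add: ln_plus_def)

lemma ln_plus_mono: "x \<le> y \<Longrightarrow> ln_plus x \<le> ln_plus y"
  by (simp add: ln_plus_def)

lemma ln_plus_eq_0: "x \<le> 1 \<Longrightarrow> ln_plus x = 0"
  by (simp add: ln_plus_def max_def)

lemma ln_plus_eq_ln: "1 \<le> x \<Longrightarrow> ln_plus x = ln x"
  by (simp add: ln_plus_def max_def)

lemma ln_le_ln_plus: "0 < x \<Longrightarrow> ln x \<le> ln_plus x"
  by (simp add: ln_plus_def)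

lemma continuous_on_ln_plus [continuous_intros]:
  "continuous_on S f \<Longrightarrow> continuous_on S (\<lambda>x. ln_plus (f x))"
  unfolding ln_plus_def by (intro continuous_intros) auto

lemma integrable_ln_plus_circle:
  "(\<lambda>\<theta>. ln_plus (cmod (\<alpha> + cis \<theta> * \<beta>))) integrable_on {0..2*pi}"
  by (intro integrable_continuous_interval continuous_intros)

lemma ln_plus_circle_mean_ge_trivial:
  assumes "cmod \<alpha> \<le> 1"
  shows "2*pi * ln_plus (cmod \<alpha>) \<le> integral {0..2*pi} (\<lambda>\<theta>. ln_plus (cmod (\<alpha> + cis \<theta> * \<beta>)))"
  using integral_nonneg[OF integrable_ln_plus_circle] assms by (simp add: ln_plus_eq_0 ln_plus_nonneg)

lemma ln_plus_circle_mean_ge_dominant: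
  assumes "cmod \<beta> < cmod \<alpha>"
  shows "2*pi * ln_plus (cmod \<alpha>) \<le> integral {0..2*pi} (\<lambda>\<theta>. ln_plus (cmod (\<alpha> + cis \<theta> * \<beta>)))"
proof (cases "cmod \<alpha> \<le> 1")
  case True
  then show ?thesis by (rule ln_plus_circle_mean_ge_trivial)
next
  case False
  have "continuous_on {0..2*pi} (\<lambda>\<theta>. ln (cmod (\<alpha> + cis \<theta> * \<beta>)))"
    using norm_add_cis_mult_neq_0[OF assms] by (intro continuous_intros) auto
  then have "integral {0..2*pi} (\<lambda>\<theta>. ln (cmod (\<alpha> + cis \<theta> * \<beta>)))
      \<le> integral {0..2*pi} (\<lambda>\<theta>. ln_plus (cmod (\<alpha> + cis \<theta> * \<beta>)))"
    using norm_add_cis_mult_neq_0[OF assms]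
    by (intro integral_le integrable_continuous_interval integrable_ln_plus_circle ln_le_ln_plus) auto
  with circle_mean_ln_norm[OF assms] False show ?thesis
    by (simp add: ln_plus_eq_ln integral_unique)
qed

text \<open>The boundary case \<open>|\<alpha>| = |\<beta>|\<close>, where \<open>\<alpha> + e^{i\<theta>} \<beta>\<close> vanishes somewhere on the circle,
  follows from the dominant case for \<open>s \<beta>\<close>, \<open>s \<nearrow> 1\<close>, by dominated convergence.\<close>
lemma ln_plus_circle_mean_ge_equal_norms:
  assumes "cmod \<alpha> = cmod \<beta>"
  shows "2*pi * ln_plus (cmod \<alpha>) \<le> integral {0..2*pi} (\<lambda>\<theta>. ln_plus (cmod (\<alpha> + cis \<theta> * \<beta>)))"
proof (cases "cmod \<alpha> \<le> 1")
  case True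
  then show ?thesis by (rule ln_plus_circle_mean_ge_trivial)
next
  case False
  define s where "s k = real k / real (Suc k)" for k
  define f where "f k \<theta> = ln_plus (cmod (\<alpha> + cis \<theta> * (of_real (s k) * \<beta>)))" for k \<theta>
  have s: "0 \<le> s k" "s k < 1" for k by (auto simp: s_def)
  have "s \<longlonglongrightarrow> 1"
    unfolding s_def[abs_def] by (rule LIMSEQ_n_over_Suc_n)
  have pointwise: "(\<lambda>k. f k \<theta>) \<longlonglongrightarrow> ln_plus (cmod (\<alpha> + cis \<theta> * \<beta>))" for \<theta>
  proof -
    have "continuous_on UNIV (\<lambda>x::real. ln_plus (cmod (\<alpha> + cis \<theta> * (of_real x * \<beta>))))"
      by (intro continuous_intros)
    then have "isCont (\<lambda>x::real. ln_plus (cmod (\<alpha> + cis \<theta> * (of_real x * \<beta>)))) 1"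
      by (simp add: continuous_on_eq_continuous_at)
    from isCont_tendsto_compose[OF this \<open>s \<longlonglongrightarrow> 1\<close>] show ?thesis by (simp add: f_def)
  qed
  have bounded: "norm (f k \<theta>) \<le> ln_plus (cmod \<alpha> + cmod \<beta>)" for k \<theta>
  proof -
    have "cmod (\<alpha> + cis \<theta> * (of_real (s k) * \<beta>)) \<le> cmod \<alpha> + cmod (cis \<theta> * (of_real (s k) * \<beta>))"
      by (rule norm_triangle_ineq)
    also have "\<dots> \<le> cmod \<alpha> + cmod \<beta>"
      using s[of k] by (simp add: norm_mult abs_of_nonneg mult_left_le_one_le)
    finally show ?thesis unfolding f_def using ln_plus_nonneg by (simp add: ln_plus_mono)
  qed
  have lim: "(\<lambda>k. integral {0..2*pi} (f k))
      \<longlonglongrightarrow> integral {0..2*pi} (\<lambda>\<theta>. ln_plus (cmod (\<alpha> + cis \<theta> * \<beta>)))"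
  proof (rule dominated_convergence(2)[OF _ _ bounded pointwise])
    show "f k integrable_on {0..2*pi}" for k
      unfolding f_def by (rule integrable_ln_plus_circle)
  qed (rule integrable_const_ivl)
  have "2*pi * ln_plus (cmod \<alpha>) \<le> integral {0..2*pi} (f k)" for k
  proof -
    have "s k * cmod \<beta> < 1 * cmod \<beta>"
      using s[of k] assms False by (intro mult_strict_right_mono) auto
    then have "cmod (of_real (s k) * \<beta>) < cmod \<alpha>"
      using s[of k] assms by (simp add: norm_mult abs_of_nonneg)
    then show ?thesis
      unfolding f_def[abs_def] by (rule ln_plus_circle_mean_ge_dominant)
  qed
  then show ?thesis by (intro LIMSEQ_le_const[OF lim]) auto
qed

lemma norm_cnj_add_cis_mult:
  "cmod (cnj \<beta> + cis \<theta> * cnj \<alpha>) = cmod (\<alpha> + cis \<theta> * \<beta>)"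
proof -
  have "cis \<theta> * cnj (cis \<theta>) = 1" by (simp add: cis_cnj cis_mult)
  then have "cnj \<beta> + cis \<theta> * cnj \<alpha> = cis \<theta> * cnj (\<alpha> + cis \<theta> * \<beta>)"
    by (simp add: distrib_left mult.assoc[symmetric])
  then show ?thesis by (simp only: norm_mult norm_cis complex_mod_cnj mult_1)
qed

lemma ln_plus_circle_mean_ge:
  "2*pi * ln_plus (cmod \<alpha>) \<le> integral {0..2*pi} (\<lambda>\<theta>. ln_plus (cmod (\<alpha> + cis \<theta> * \<beta>)))"
proof -
  consider "cmod \<beta> < cmod \<alpha>" | "cmod \<alpha> < cmod \<beta>" | "cmod \<alpha> = cmod \<beta>" by linarith
  then show ?thesis
  proof cases
    case 1
    then show ?thesis by (rule ln_plus_circle_mean_ge_dominant)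
  next
    case 2
    have "2*pi * ln_plus (cmod \<alpha>) \<le> 2*pi * ln_plus (cmod \<beta>)"
      using 2 by (intro mult_left_mono ln_plus_mono) auto
    also have "\<dots> \<le> integral {0..2*pi} (\<lambda>\<theta>. ln_plus (cmod (cnj \<beta> + cis \<theta> * cnj \<alpha>)))"
      using ln_plus_circle_mean_ge_dominant[of "cnj \<alpha>" "cnj \<beta>"] 2 by (simp only: complex_mod_cnj)
    finally show ?thesis unfolding norm_cnj_add_cis_mult .
  next
    case 3
    then show ?thesis by (rule ln_plus_circle_mean_ge_equal_norms)
  qed
qed

section \<open>A maximum principle on annuli\<close>

text \<open>The sub-mean value inequality on circles, phrased through continuous majorants of \<open>v\<close> on
  the circle so that only integrals of continuous functions occur.\<close>
definition circle_sub_mean :: "(complex \<Rightarrow> ereal) \<Rightarrow> bool" where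
  "circle_sub_mean v \<longleftrightarrow> (\<forall>z r F. 0 < r \<longrightarrow> continuous_on {0..2*pi} F \<longrightarrow>
     (\<forall>\<theta>\<in>{0..2*pi}. v (z + of_real r * cis \<theta>) \<le> ereal (F \<theta>)) \<longrightarrow>
     v z \<le> ereal (integral {0..2*pi} F / (2*pi)))"

lemma usc_attains_max_on_compact:
  fixes h :: "'a::metric_space \<Rightarrow> ereal"
  assumes A: "compact A" "A \<noteq> {}"
    and usc: "\<And>x t. x \<in> A \<Longrightarrow> h x < t \<Longrightarrow> \<exists>\<delta>>0. \<forall>y\<in>A. dist y x < \<delta> \<longrightarrow> h y < t"
  shows "\<exists>x\<in>A. \<forall>y\<in>A. h y \<le> h x"
proof (rule ccontr)
  assume "\<not> ?thesis"
  then obtain Y where Y: "\<And>x. x \<in> A \<Longrightarrow> Y x \<in> A \<and> h x < h (Y x)"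
    by (metis not_le)
  have "\<forall>x\<in>A. \<exists>\<delta>>0. \<forall>y\<in>A. dist y x < \<delta> \<longrightarrow> h y < h (Y x)"
    using usc Y by blast
  then obtain D where D: "\<And>x. x \<in> A \<Longrightarrow> D x > 0 \<and> (\<forall>y\<in>A. dist y x < D x \<longrightarrow> h y < h (Y x))"
    by metis
  have cover: "A \<subseteq> \<Union> ((\<lambda>x. ball x (D x)) ` A)"
    using D by force
  obtain C where C: "C \<subseteq> A" "finite C" "A \<subseteq> \<Union> ((\<lambda>x. ball x (D x)) ` C)"
    by (rule compactE_image[OF A(1) _ cover]) auto
  then have "C \<noteq> {}" using A(2) by auto
  then have "Max ((\<lambda>i. h (Y i)) ` C) \<in> (\<lambda>i. h (Y i)) ` C"
    using C(2) by (intro Max_in) auto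
  then obtain j where j: "j \<in> C" "h (Y j) = Max ((\<lambda>i. h (Y i)) ` C)"
    by auto
  then have j_max: "\<forall>i\<in>C. h (Y i) \<le> h (Y j)"
    using C(2) by auto
  have "Y j \<in> A" using Y j C by auto
  then obtain i where "i \<in> C" "Y j \<in> ball i (D i)" using C by auto
  then have "h (Y j) < h (Y i)" using D[of i] C \<open>Y j \<in> A\<close> by (auto simp: dist_commute)
  with j_max \<open>i \<in> C\<close> show False by (meson not_le)
qed

lemma usc_diff_continuous:
  fixes v :: "'a::metric_space \<Rightarrow> ereal" and \<psi> :: "'a \<Rightarrow> real"
  assumes usc: "\<And>x t. v x < t \<Longrightarrow> \<exists>\<delta>>0. \<forall>y. dist y x < \<delta> \<longrightarrow> v y < t"
    and finite: "\<And>x. v x < \<infinity>"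
    and cont: "continuous_on A \<psi>"
    and "x \<in> A" "v x - ereal (\<psi> x) < t"
  shows "\<exists>\<delta>>0. \<forall>y\<in>A. dist y x < \<delta> \<longrightarrow> v y - ereal (\<psi> y) < t"
proof (cases t)
  case PInf
  have "v y - ereal (\<psi> y) < \<infinity>" for y
    using finite[of y] by (cases "v y") auto
  then show ?thesis using PInf by (auto intro!: exI[of _ 1])
next
  case MInf
  then show ?thesis using assms(5) by simp
next
  case (real t')
  have "v x < ereal (t' + \<psi> x)"
    using assms(5) real by (cases "v x") auto
  then obtain s where s: "v x < ereal s" "s < t' + \<psi> x"
    using ereal_dense2 less_ereal.simps(1) by blast
  obtain d1 where d1: "d1 > 0" "\<And>y. dist y x < d1 \<Longrightarrow> v y < ereal s"
    using usc[OF s(1)] by blast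
  obtain d2 where d2: "d2 > 0" "\<And>y. y \<in> A \<Longrightarrow> dist y x < d2 \<Longrightarrow> dist (\<psi> y) (\<psi> x) < t' + \<psi> x - s"
    using cont \<open>x \<in> A\<close> s(2) unfolding continuous_on_iff by (metis diff_gt_0_iff_gt)
  show ?thesis
  proof (intro exI[of _ "min d1 d2"] conjI ballI impI)
    fix y assume "y \<in> A" "dist y x < min d1 d2"
    then have "v y < ereal s" "dist (\<psi> y) (\<psi> x) < t' + \<psi> x - s"
      using d1 d2 by auto
    moreover from this(2) have "s < t' + \<psi> y"
      by (simp add: dist_real_def abs_less_iff)
    ultimately have "v y < ereal (t' + \<psi> y)" by (metis less_ereal.simps(1) order.strict_trans)
    then show "v y - ereal (\<psi> y) < t" using real by (cases "v y") auto
  qed (use d1 d2 in auto)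
qed

definition perturbed_ln :: "real \<Rightarrow> real \<Rightarrow> complex \<Rightarrow> real" where
  "perturbed_ln c \<epsilon> w = c * ln (cmod w) - \<epsilon> * (cmod w)^2"

lemma perturbed_ln_circle_mean:
  assumes "0 < r" "r < cmod l"
  shows "((\<lambda>\<theta>. perturbed_ln c \<epsilon> (l + of_real r * cis \<theta>))
    has_integral 2*pi * (perturbed_ln c \<epsilon> l - \<epsilon> * r^2)) {0..2*pi}"
proof -
  have "((\<lambda>\<theta>. ln (cmod (l + of_real r * cis \<theta>))) has_integral 2*pi * ln (cmod l)) {0..2*pi}"
    using circle_mean_ln_norm[of "of_real r" l] assms by (simp add: mult.commute)
  from has_integral_diff[OF has_integral_cmul[OF this, of c]
      has_integral_cmul[OF circle_mean_norm_square, of \<epsilon>]]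
  show ?thesis by (simp add: perturbed_ln_def algebra_simps)
qed

text \<open>\<open>c ln \<bar>w\<bar>\<close> is harmonic and \<open>-\<epsilon> \<bar>w\<bar>\<^sup>2\<close> strictly superharmonic, so \<open>v - perturbed_ln c \<epsilon>\<close>
  satisfies a strict sub-mean value inequality and cannot attain a finite local maximum.\<close>
lemma circle_sub_mean_no_max_on_circle:
  assumes sub: "circle_sub_mean v" and finite: "\<And>x. v x < \<infinity>"
    and "0 < r" "r < cmod l" "0 < \<epsilon>"
    and le: "\<And>\<theta>. v (l + of_real r * cis \<theta>) - ereal (perturbed_ln c \<epsilon> (l + of_real r * cis \<theta>))
      \<le> v l - ereal (perturbed_ln c \<epsilon> l)"
  shows "v l = -\<infinity>"
proof (rule ccontr)
  assume "v l \<noteq> -\<infinity>"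
  then obtain V where V: "v l = ereal V" using finite[of l] by (cases "v l") auto
  define F where "F \<theta> = V - perturbed_ln c \<epsilon> l + perturbed_ln c \<epsilon> (l + of_real r * cis \<theta>)" for \<theta>
  have "l + of_real r * cis \<theta> \<noteq> 0" for \<theta>
    using norm_add_cis_mult_neq_0[of "of_real r" l \<theta>] assms(3,4) by (simp add: mult.commute)
  then have "continuous_on {0..2*pi} F"
    unfolding F_def perturbed_ln_def by (intro continuous_intros) auto
  moreover have "v (l + of_real r * cis \<theta>) \<le> ereal (F \<theta>)" for \<theta>
    using le[of \<theta>] V finite[of "l + of_real r * cis \<theta>"]
    by (cases "v (l + of_real r * cis \<theta>)") (auto simp: F_def)
  ultimately have "v l \<le> ereal (integral {0..2*pi} F / (2*pi))"
    using sub \<open>0 < r\<close> unfolding circle_sub_mean_def by blast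
  moreover have "(F has_integral 2*pi * (V - \<epsilon> * r^2)) {0..2*pi}"
    using has_integral_add[OF has_integral_const_real[of "V - perturbed_ln c \<epsilon> l" 0 "2*pi"]
        perturbed_ln_circle_mean[OF assms(3,4), of c \<epsilon>]]
    unfolding F_def by (simp add: algebra_simps)
  ultimately have "V \<le> V - \<epsilon> * r^2"
    using V by (simp add: integral_unique)
  moreover have "0 < \<epsilon> * r^2" using assms(3,5) by simp
  ultimately show False by linarith
qed

lemma annulus_maximum_principle:
  fixes v :: "complex \<Rightarrow> ereal" and c \<epsilon> \<rho> :: real
  assumes usc: "\<And>x t. v x < t \<Longrightarrow> \<exists>\<delta>>0. \<forall>y. dist y x < \<delta> \<longrightarrow> v y < t"
    and finite: "\<And>x. v x < \<infinity>"
    and sub: "circle_sub_mean v"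
    and inner: "\<And>w. cmod w = 1 \<Longrightarrow> v w \<le> 0"
    and outer: "\<And>w. cmod w = \<rho> \<Longrightarrow> v w \<le> ereal (c * ln \<rho>)"
    and "0 < \<epsilon>" "1 \<le> cmod l" "cmod l \<le> \<rho>"
  shows "v l \<le> ereal (c * ln (cmod l) + \<epsilon> * (1 + \<rho>^2))"
proof -
  define A where "A = {w::complex. 1 \<le> cmod w \<and> cmod w \<le> \<rho>}"
  let ?\<psi> = "perturbed_ln c \<epsilon>"
  have "A = cball 0 \<rho> - ball 0 1" by (auto simp: A_def)
  then have "compact A" by (simp add: compact_diff)
  have "continuous_on A ?\<psi>" unfolding perturbed_ln_def A_def by (intro continuous_intros) auto
  moreover have "A \<noteq> {}" "l \<in> A" using assms by (auto simp: A_def)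
  ultimately obtain l0 where l0: "l0 \<in> A"
    and max: "\<And>y. y \<in> A \<Longrightarrow> v y - ereal (?\<psi> y) \<le> v l0 - ereal (?\<psi> l0)"
    using usc_attains_max_on_compact[OF \<open>compact A\<close>, of "\<lambda>w. v w - ereal (?\<psi> w)"]
      usc_diff_continuous[OF usc finite] by blast
  have "v l0 - ereal (?\<psi> l0) \<le> ereal (\<epsilon> * (1 + \<rho>^2))"
  proof -
    consider "cmod l0 = 1" | "cmod l0 = \<rho>" | "1 < cmod l0" "cmod l0 < \<rho>"
      using l0 by (fastforce simp: A_def)
    then show ?thesis
    proof cases
      case 1
      have "v l0 - ereal (?\<psi> l0) \<le> 0 - ereal (- \<epsilon>)"
        using inner[OF 1] 1 by (intro ereal_minus_mono) (auto simp: perturbed_ln_def)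
      then show ?thesis using \<open>0 < \<epsilon>\<close> by (simp add: order_trans)
    next
      case 2
      have "v l0 - ereal (?\<psi> l0) \<le> ereal (c * ln \<rho>) - ereal (c * ln \<rho> - \<epsilon> * \<rho>^2)"
        using outer[OF 2] 2 by (intro ereal_minus_mono) (auto simp: perturbed_ln_def)
      then show ?thesis using \<open>0 < \<epsilon>\<close> by (simp add: algebra_simps order_trans)
    next
      case 3
      define r where "r = min (cmod l0 - 1) (\<rho> - cmod l0) / 2"
      have "0 < r" "r < cmod l0" "r \<le> (cmod l0 - 1) / 2" "r \<le> (\<rho> - cmod l0) / 2"
        using 3 by (auto simp: r_def)
      have "l0 + of_real r * cis \<theta> \<in> A" for \<theta>
      proof -
        have "\<bar>cmod (l0 + of_real r * cis \<theta>) - cmod l0\<bar> \<le> r"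
          using norm_triangle_ineq3[of "l0 + of_real r * cis \<theta>" l0] \<open>0 < r\<close> by (simp add: norm_mult)
        then show ?thesis using 3 \<open>r \<le> (cmod l0 - 1) / 2\<close> \<open>r \<le> (\<rho> - cmod l0) / 2\<close>
          by (auto simp: A_def abs_le_iff)
      qed
      then have "v l0 = -\<infinity>"
        using max \<open>0 < \<epsilon>\<close> \<open>0 < r\<close> \<open>r < cmod l0\<close>
        by (intro circle_sub_mean_no_max_on_circle[OF sub finite]) auto
      then show ?thesis by simp
    qed
  qed
  then have "v l - ereal (?\<psi> l) \<le> ereal (\<epsilon> * (1 + \<rho>^2))"
    using max[OF \<open>l \<in> A\<close>] by (rule order_trans[rotated])
  then have "v l \<le> ereal (\<epsilon> * (1 + \<rho>^2) + ?\<psi> l)"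
    by (cases "v l") auto
  also have "\<dots> \<le> ereal (c * ln (cmod l) + \<epsilon> * (1 + \<rho>^2))"
    using \<open>0 < \<epsilon>\<close> by (simp add: perturbed_ln_def)
  finally show ?thesis .
qed

section \<open>The extremal function of the unit ball\<close>

lemma norm_pt_square: "(norm (z::pt))^2 = (cmod (fst z))^2 + (cmod (snd z))^2"
  by (cases z) (simp add: norm_Pair)

lemma norm_pt_eq: "norm (z::pt) = sqrt ((cmod (fst z))^2 + (cmod (snd z))^2)"
  by (metis norm_ge_zero norm_pt_square real_sqrt_unique)

lemma unit_ball_pt: "{z::pt. (cmod (fst z))\<^sup>2 + (cmod (snd z))\<^sup>2 \<le> 1} = cball 0 1"
proof -
  have "norm z \<le> 1 \<longleftrightarrow> (norm z)^2 \<le> 1" for z :: pt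
    by (metis abs_norm_cancel abs_square_le_1)
  then show ?thesis by (auto simp: norm_pt_square)
qed

lemma mem_unit_ball_pt: "z \<in> cball 0 1 \<longleftrightarrow> (cmod (fst z))\<^sup>2 + (cmod (snd z))\<^sup>2 \<le> 1"
  using unit_ball_pt by blast

lemma usc_continuous:
  assumes "continuous_on UNIV (g :: pt \<Rightarrow> real)"
  shows "usc (\<lambda>w. ereal (g w))"
  unfolding usc_def
proof
  fix x
  have "(g \<longlongrightarrow> g x) (at x)" using assms unfolding continuous_on_def by blast
  then have "((\<lambda>w. ereal (g w)) \<longlongrightarrow> ereal (g x)) (at x)" by (rule tendsto_ereal)
  then have "Limsup (at x) (\<lambda>w. ereal (g w)) = ereal (g x)"
    by (intro lim_imp_Limsup) auto
  then show "Limsup (at x) (\<lambda>w. ereal (g w)) \<le> ereal (g x)" by simp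
qed

lemma usc_imp_less_near:
  assumes "usc u" "u x < t"
  shows "\<exists>\<delta>>0. \<forall>y. dist y x < \<delta> \<longrightarrow> u y < t"
proof -
  have "Limsup (at x) u < t" using assms unfolding usc_def by (meson le_less_trans)
  then have "eventually (\<lambda>y. u y < t) (at x)" by (rule Limsup_lessD)
  then obtain d where "d > 0" "\<And>y. y \<noteq> x \<Longrightarrow> dist y x < d \<Longrightarrow> u y < t"
    unfolding eventually_at by auto
  with assms(2) show ?thesis by (metis dist_self)
qed

definition coord_along :: "pt \<Rightarrow> pt \<Rightarrow> complex" where
  "coord_along z w = (fst w * cnj (fst z) + snd w * cnj (snd z)) / of_real (norm z)"

lemma norm_coord_along_le: "z \<noteq> 0 \<Longrightarrow> cmod (coord_along z w) \<le> norm w"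
proof -
  assume "z \<noteq> 0"
  have "cmod (fst w * cnj (fst z) + snd w * cnj (snd z))
      \<le> cmod (fst w) * cmod (fst z) + cmod (snd w) * cmod (snd z)"
    by (metis norm_triangle_ineq norm_mult complex_mod_cnj)
  also have "\<dots> \<le> norm w * norm z"
    using norm_cauchy_schwarz[of "(cmod (fst w), cmod (snd w))" "(cmod (fst z), cmod (snd z))"]
    by (simp add: norm_Pair inner_Pair norm_pt_eq)
  finally show ?thesis
    using \<open>z \<noteq> 0\<close> by (simp add: coord_along_def norm_divide divide_le_eq)
qed

lemma coord_along_self: "z \<noteq> 0 \<Longrightarrow> coord_along z z = of_real (norm z)"
proof -
  assume "z \<noteq> 0"
  have "fst z * cnj (fst z) + snd z * cnj (snd z) = of_real ((norm z)^2)"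
    unfolding norm_pt_square by (simp add: complex_mult_cnj cmod_power2)
  with \<open>z \<noteq> 0\<close> show ?thesis by (simp add: coord_along_def power2_eq_square)
qed

lemma coord_along_circ_pt: "coord_along z (circ_pt a b \<theta>) = coord_along z a + cis \<theta> * coord_along z b"
  by (simp add: coord_along_def circ_pt_def algebra_simps add_divide_distrib)

lemma psh_ln_plus_coord_along: "psh (\<lambda>w. ereal (ln_plus (cmod (coord_along z w))))"
proof -
  have "continuous_on UNIV (\<lambda>w. ln_plus (cmod (coord_along z w)))"
    unfolding coord_along_def divide_inverse by (intro continuous_intros)
  moreover have "ereal (ln_plus (cmod (coord_along z a)))
      \<le> circ_mean (\<lambda>w. ereal (ln_plus (cmod (coord_along z w)))) a b" for a b
  proof -
    have "ln_plus (cmod (coord_along z a))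
        \<le> integral {0..2*pi} (\<lambda>\<theta>. ln_plus (cmod (coord_along z a + cis \<theta> * coord_along z b))) / (2*pi)"
      using ln_plus_circle_mean_ge[of "coord_along z a" "coord_along z b"]
      by (simp add: pos_le_divide_eq mult.commute)
    also have "ereal \<dots> \<le> circ_mean (\<lambda>w. ereal (ln_plus (cmod (coord_along z w)))) a b"
      by (rule integral_le_circ_mean) (intro continuous_intros, simp add: coord_along_circ_pt)
    finally show ?thesis by simp
  qed
  ultimately show ?thesis by (auto simp: psh_def usc_continuous)
qed

lemma V_ext_unit_ball_ge:
  assumes "z \<noteq> 0"
  shows "ereal (ln_plus (norm z)) \<le> V_ext (cball 0 1) z"
proof -
  let ?u = "\<lambda>w. ereal (ln_plus (cmod (coord_along z w)))"
  have "?u w \<le> ereal (ln (norm w) + 0)" if "1 \<le> norm w" for w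
  proof -
    have "ln_plus (cmod (coord_along z w)) \<le> ln_plus (norm w)"
      by (rule ln_plus_mono[OF norm_coord_along_le[OF assms]])
    then show ?thesis using ln_plus_eq_ln[OF that] by simp
  qed
  moreover have "?u w \<le> 0" if "w \<in> cball 0 1" for w
    using norm_coord_along_le[OF assms, of w] that by (simp add: ln_plus_eq_0)
  ultimately have "psh ?u \<and> (\<exists>C R. \<forall>w. R \<le> norm w \<longrightarrow> ?u w \<le> ereal (ln (norm w) + C))
      \<and> (\<forall>w\<in>cball 0 1. ?u w \<le> 0)"
    using psh_ln_plus_coord_along by blast
  then have "?u z \<le> V_ext (cball 0 1) z"
    unfolding V_ext_def by (intro Sup_upper CollectI exI[of _ ?u]) simp
  then show ?thesis by (simp add: coord_along_self[OF assms])
qed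

lemma norm_scaled_pt: "norm (l * fst e, l * snd e) = cmod l * norm (e::pt)"
proof -
  have "(norm (l * fst e, l * snd e))^2 = (cmod l * norm e)^2"
    by (simp add: norm_pt_square norm_mult power_mult_distrib algebra_simps)
  then show ?thesis by (simp add: power2_eq_iff_nonneg)
qed

lemma psh_restrict_complex_line:
  fixes u :: "pt \<Rightarrow> ereal" and e :: pt
  assumes "psh u" "norm e = 1"
  defines "v \<equiv> \<lambda>l. u (l * fst e, l * snd e)"
  shows "\<And>x t. v x < t \<Longrightarrow> \<exists>\<delta>>0. \<forall>y. dist y x < \<delta> \<longrightarrow> v y < t"
    and "\<And>x. v x < \<infinity>"
    and "circle_sub_mean v"
proof -
  have dist_eq: "dist (a * fst e, a * snd e) (b * fst e, b * snd e) = dist a b" for a b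
    using norm_scaled_pt[of "a - b" e] assms(2) by (simp add: dist_norm algebra_simps)
  show "\<exists>\<delta>>0. \<forall>y. dist y x < \<delta> \<longrightarrow> v y < t" if "v x < t" for x t
    using usc_imp_less_near[of u _ t] assms(1) that unfolding psh_def v_def by (metis dist_eq)
  show "v x < \<infinity>" for x
    using assms(1) by (simp add: psh_def v_def)
  show "circle_sub_mean v"
    unfolding circle_sub_mean_def
  proof (intro allI impI)
    fix z r F
    assume "continuous_on {0..2*pi} F" "\<forall>\<theta>\<in>{0..2*pi}. v (z + of_real r * cis \<theta>) \<le> ereal (F \<theta>)"
    moreover have "circ_pt (z * fst e, z * snd e) (of_real r * fst e, of_real r * snd e) \<theta>
        = ((z + of_real r * cis \<theta>) * fst e, (z + of_real r * cis \<theta>) * snd e)" for \<theta>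
      by (simp add: circ_pt_def algebra_simps)
    ultimately have "circ_mean u (z * fst e, z * snd e) (of_real r * fst e, of_real r * snd e)
        \<le> ereal (integral {0..2*pi} F / (2*pi))"
      by (intro circ_mean_le_integral) (auto simp: v_def)
    moreover have "v z \<le> circ_mean u (z * fst e, z * snd e) (of_real r * fst e, of_real r * snd e)"
      using assms(1) by (simp add: psh_def v_def)
    ultimately show "v z \<le> ereal (integral {0..2*pi} F / (2*pi))"
      by (rule order_trans[rotated])
  qed
qed

text \<open>On the complex line through \<open>z\<close>, \<open>u\<close> is \<open>\<le> 0\<close> on the unit circle and, as the slack
  \<open>c > 1\<close> absorbs the constant \<open>C\<close>, \<open>\<le> c ln \<rho>\<close> on a large circle of radius \<open>\<rho>\<close>.\<close>
lemma psh_le_scaled_ln_norm: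
  fixes u :: "pt \<Rightarrow> ereal" and z :: pt and c :: real
  assumes "psh u" and below: "\<forall>w\<in>cball 0 1. u w \<le> 0"
    and growth: "\<forall>w. R \<le> norm w \<longrightarrow> u w \<le> ereal (ln (norm w) + C)"
    and "1 < norm z" "1 < c"
  shows "u z \<le> ereal (c * ln (norm z))"
proof -
  define n where "n = norm z"
  define e where "e = (fst z / of_real n, snd z / of_real n)"
  define v where "v l = u (l * fst e, l * snd e)" for l
  have "n > 1" using assms by (simp add: n_def)
  have "norm e = cmod (1 / of_real n) * norm z"
    using norm_scaled_pt[of "1 / of_real n" z] by (simp add: e_def)
  then have "norm e = 1"
    using \<open>n > 1\<close> by (auto simp: norm_divide n_def)
  have v_norm: "norm (l * fst e, l * snd e) = cmod l" for l
    using norm_scaled_pt[of l e] \<open>norm e = 1\<close> by simp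
  have v_z: "v (of_real n) = u z"
    using \<open>n > 1\<close> by (simp add: v_def e_def)
  have "filterlim (\<lambda>\<rho>. (c - 1) * ln \<rho>) at_top at_top"
    using \<open>1 < c\<close> by (intro filterlim_tendsto_pos_mult_at_top[OF tendsto_const] ln_at_top) auto
  then have "eventually (\<lambda>\<rho>. (1 < \<rho> \<and> n \<le> \<rho> \<and> R \<le> \<rho>) \<and> C \<le> (c - 1) * ln \<rho>) at_top"
    by (intro eventually_conj eventually_gt_at_top eventually_ge_at_top) (simp add: filterlim_at_top)
  then obtain \<rho> where \<rho>: "1 < \<rho>" "n \<le> \<rho>" "R \<le> \<rho>" and C_le: "C \<le> (c - 1) * ln \<rho>"
    by (auto simp: eventually_at_top_linorder)
  have inner: "v l \<le> 0" if "cmod l = 1" for l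
    using below that by (simp add: v_def v_norm)
  have outer: "v l \<le> ereal (c * ln \<rho>)" if "cmod l = \<rho>" for l
  proof -
    have R_le: "R \<le> norm (l * fst e, l * snd e)" using \<rho>(3) that by (simp add: v_norm)
    have "v l \<le> ereal (ln \<rho> + C)"
      using growth[rule_format, OF R_le] that v_norm[of l] by (simp add: v_def)
    also have "\<dots> \<le> ereal (c * ln \<rho>)" using C_le by (simp add: algebra_simps)
    finally show ?thesis .
  qed
  have "u z \<le> ereal (c * ln n) + ereal \<epsilon>" if "0 < \<epsilon>" for \<epsilon>
  proof -
    have "0 < 1 + \<rho>^2" by (simp add: add_pos_nonneg)
    have "v (of_real n) \<le> ereal (c * ln n + \<epsilon> / (1 + \<rho>^2) * (1 + \<rho>^2))"
      using annulus_maximum_principle[OF psh_restrict_complex_line[OF \<open>psh u\<close> \<open>norm e = 1\<close>,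
          folded v_def] inner outer, of "\<epsilon> / (1 + \<rho>^2)" "of_real n"] \<open>n > 1\<close> \<rho> that
        \<open>0 < 1 + \<rho>^2\<close>
      by simp
    then show ?thesis
      using v_z \<open>0 < 1 + \<rho>^2\<close> by simp
  qed
  then have "u z \<le> ereal (c * ln n)" by (rule ereal_le_epsilon2)
  then show ?thesis by (simp add: n_def)
qed

lemma psh_le_ln_norm:
  fixes u :: "pt \<Rightarrow> ereal"
  assumes "psh u" "\<forall>w\<in>cball 0 1. u w \<le> 0"
    and "\<forall>w. R \<le> norm w \<longrightarrow> u w \<le> ereal (ln (norm w) + C)"
    and "1 < norm z"
  shows "u z \<le> ereal (ln (norm z))"
proof (rule ereal_le_epsilon2)
  fix \<epsilon> :: real assume "0 < \<epsilon>"
  have "0 < ln (norm z)" using assms(4) by (rule ln_gt_zero)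
  then have "u z \<le> ereal ((1 + \<epsilon> / ln (norm z)) * ln (norm z))"
    using \<open>0 < \<epsilon>\<close> by (intro psh_le_scaled_ln_norm[OF assms]) simp
  also have "(1 + \<epsilon> / ln (norm z)) * ln (norm z) = ln (norm z) + \<epsilon>"
    using \<open>0 < ln (norm z)\<close> by (simp add: field_simps)
  finally show "u z \<le> ereal (ln (norm z)) + ereal \<epsilon>" by simp
qed

lemma V_ext_unit_ball:
  assumes "1 < norm (z::pt)"
  shows "V_ext (cball 0 1) z = ereal (ln (norm z))"
proof (rule antisym)
  show "V_ext (cball 0 1) z \<le> ereal (ln (norm z))"
    unfolding V_ext_def using psh_le_ln_norm assms by (intro Sup_least) blast
  have "z \<noteq> 0" using assms by auto
  from V_ext_unit_ball_ge[OF this] show "ereal (ln (norm z)) \<le> V_ext (cball 0 1) z"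
    using assms by (simp add: ln_plus_eq_ln)
qed

lemma usc_reg_V_ext_unit_ball:
  assumes "1 < norm (z::pt)"
  shows "usc_reg (V_ext (cball 0 1)) z = ereal (ln (norm z))"
proof -
  have "((\<lambda>w. norm w) \<longlongrightarrow> norm z) (at z)" by (intro tendsto_intros)
  then have "eventually (\<lambda>w. 1 < norm w) (at z)"
    using assms by (rule order_tendstoD(1))
  then have "Limsup (at z) (V_ext (cball 0 1)) = Limsup (at z) (\<lambda>w. ereal (ln (norm w)))"
    by (intro Limsup_eq) (auto elim!: eventually_mono simp: V_ext_unit_ball)
  also have "\<dots> = ereal (ln (norm z))"
  proof (rule lim_imp_Limsup)
    show "((\<lambda>w. ereal (ln (norm w))) \<longlongrightarrow> ereal (ln (norm z))) (at z)"
      using assms by (intro tendsto_intros tendsto_ereal) auto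
  qed simp
  finally show ?thesis unfolding usc_reg_def using V_ext_unit_ball[OF assms] by simp
qed

lemma eventually_norm_gt_1_at_infinity: "eventually (\<lambda>z::pt. 1 < norm z) at_infinity"
  unfolding eventually_at_infinity by (intro exI[of _ 2]) auto

lemma cap_C_unit_ball: "cap_C (cball 0 1) = 1"
proof -
  have "Limsup at_infinity (\<lambda>z. usc_reg (V_ext (cball 0 1)) z - ereal (ln (norm z)))
      = Limsup at_infinity (\<lambda>z::pt. 0 :: ereal)"
    using eventually_norm_gt_1_at_infinity
    by (intro Limsup_eq) (auto elim!: eventually_mono simp: usc_reg_V_ext_unit_ball)
  also have "\<dots> = 0" by (rule Limsup_const[OF trivial_limit_at_infinity])
  finally show ?thesis by (simp add: cap_C_def exp_neg_ereal_def)
qed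

lemma Limsup_ge_frequently:
  assumes "\<And>P. eventually P F \<Longrightarrow> \<exists>x. P x \<and> C \<le> f x"
  shows "C \<le> Limsup F (f :: _ \<Rightarrow> ereal)"
  unfolding Limsup_def
proof (rule INF_greatest)
  fix P assume "P \<in> {P. eventually P F}"
  then obtain x where "P x" "C \<le> f x" using assms by blast
  then show "C \<le> (SUP x\<in>{x. P x}. f x)" by (meson SUP_upper2 mem_Collect_eq)
qed

lemma norm_le_sqrt2_maxnorm: "norm (z::pt) \<le> sqrt 2 * maxnorm z"
proof -
  have "(cmod (fst z))^2 \<le> (maxnorm z)^2" "(cmod (snd z))^2 \<le> (maxnorm z)^2"
    by (intro power_mono; simp add: maxnorm_def)+
  then have "sqrt ((norm z)^2) \<le> sqrt (2 * (maxnorm z)^2)"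
    by (intro real_sqrt_le_mono) (simp add: norm_pt_square)
  moreover have "0 \<le> maxnorm z" by (simp add: maxnorm_def le_max_iff_disj)
  ultimately show ?thesis by (simp add: real_sqrt_mult)
qed

lemma ln_norm_minus_ln_maxnorm_le:
  assumes "z \<noteq> 0"
  shows "ln (norm z) - ln (maxnorm (z::pt)) \<le> ln (sqrt 2)"
proof -
  have "0 < maxnorm z"
  proof (rule ccontr)
    assume "\<not> 0 < maxnorm z"
    then have "sqrt 2 * maxnorm z \<le> 0" by (simp add: mult_nonneg_nonpos)
    moreover have "0 < norm z" using assms by simp
    ultimately show False using norm_le_sqrt2_maxnorm[of z] by linarith
  qed
  have "ln (norm z) \<le> ln (sqrt 2 * maxnorm z)"
    using norm_le_sqrt2_maxnorm[of z] assms \<open>0 < maxnorm z\<close> by (subst ln_le_cancel_iff) auto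
  also have "\<dots> = ln (sqrt 2) + ln (maxnorm z)"
    using \<open>0 < maxnorm z\<close> by (simp add: ln_mult_pos)
  finally show ?thesis by simp
qed

lemma cap_c_unit_ball: "cap_c (cball 0 1) = ereal (1 / sqrt 2)"
proof -
  define g where "g z = ereal (ln (norm z) - ln (maxnorm z))" for z :: pt
  have "usc_reg (V_ext (cball 0 1)) z - ereal (ln (maxnorm z)) = g z" if "1 < norm z" for z
    using that by (simp add: usc_reg_V_ext_unit_ball g_def)
  then have "Limsup at_infinity (\<lambda>z. usc_reg (V_ext (cball 0 1)) z - ereal (ln (maxnorm z)))
      = Limsup at_infinity g"
    using eventually_norm_gt_1_at_infinity by (intro Limsup_eq) (auto elim!: eventually_mono)
  also have "\<dots> = ereal (ln (sqrt 2))"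
  proof (rule antisym)
    have "g z \<le> ereal (ln (sqrt 2))" if "1 < norm z" for z
    proof -
      have "z \<noteq> 0" using that by auto
      then show ?thesis by (simp add: g_def ln_norm_minus_ln_maxnorm_le)
    qed
    then show "Limsup at_infinity g \<le> ereal (ln (sqrt 2))"
      using eventually_norm_gt_1_at_infinity by (intro Limsup_bounded) (auto elim!: eventually_mono)
    show "ereal (ln (sqrt 2)) \<le> Limsup at_infinity g"
    proof (rule Limsup_ge_frequently)
      fix P assume "eventually P (at_infinity :: pt filter)"
      then obtain b where b: "\<And>x::pt. b \<le> norm x \<Longrightarrow> P x" unfolding eventually_at_infinity by blast
      define t where "t = max b 2"
      define x where "x = (complex_of_real t, complex_of_real t)"
      have t: "2 \<le> t" "b \<le> t" by (auto simp: t_def)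
      have norm_x: "norm x = sqrt 2 * t"
        using t by (simp add: x_def norm_Pair real_sqrt_mult power2_eq_square[symmetric])
      have "t \<le> sqrt 2 * t" using mult_right_mono[of 1 "sqrt 2" t] t by simp
      then have "b \<le> norm x" using t norm_x by linarith
      then have "P x" by (rule b)
      moreover have "maxnorm x = t" using t by (simp add: x_def maxnorm_def)
      then have "g x = ereal (ln (sqrt 2))"
        using t by (simp add: g_def norm_x ln_mult_pos)
      ultimately show "\<exists>x. P x \<and> ereal (ln (sqrt 2)) \<le> g x" by (metis order_refl)
    qed
  qed
  finally show ?thesis
    by (simp add: cap_c_def exp_neg_ereal_def exp_minus inverse_eq_divide)
qed

section \<open>The enumeration of multi-indices\<close>

lemma mi_less_irrefl: "\<not> mi_less b b"
  by (auto simp: mi_less_def)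

lemma mi_less_trans: "mi_less a b \<Longrightarrow> mi_less b c \<Longrightarrow> mi_less a c"
  by (auto simp: mi_less_def)

lemma mi_less_total: "b \<noteq> b' \<Longrightarrow> mi_less b b' \<or> mi_less b' b"
  by (cases b; cases b') (auto simp: mi_less_def mlen_def)

lemma finite_mi_less_pred: "finite {g. mi_less g b}"
proof -
  have "{g. mi_less g b} \<subseteq> {..mlen b} \<times> {..mlen b}"
    by (auto simp: mi_less_def mlen_def)
  then show ?thesis by (rule finite_subset) simp
qed

definition mi_rank :: "nat \<times> nat \<Rightarrow> nat" where "mi_rank b = card {g. mi_less g b}"

lemma mi_rank_less: "mi_less b b' \<Longrightarrow> mi_rank b < mi_rank b'"
  unfolding mi_rank_def
proof (rule psubset_card_mono[OF finite_mi_less_pred])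
  assume bb: "mi_less b b'"
  have "{g. mi_less g b} \<subseteq> {g. mi_less g b'}" using bb mi_less_trans by blast
  moreover have "b \<in> {g. mi_less g b'}" "b \<notin> {g. mi_less g b}" using bb mi_less_irrefl by auto
  ultimately show "{g. mi_less g b} \<subset> {g. mi_less g b'}" by blast
qed

lemma inj_mi_rank: "inj mi_rank"
proof (rule injI)
  fix b b' assume "mi_rank b = mi_rank b'"
  show "b = b'"
  proof (rule ccontr)
    assume "b \<noteq> b'"
    then have "mi_less b b' \<or> mi_less b' b" by (rule mi_less_total)
    then have "mi_rank b < mi_rank b' \<or> mi_rank b' < mi_rank b" using mi_rank_less by blast
    with \<open>mi_rank b = mi_rank b'\<close> show False by simp
  qed
qed

lemma mi_rank_image_pred: "mi_rank ` {g. mi_less g b} = {..<mi_rank b}"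
proof (rule card_subset_eq)
  show "mi_rank ` {g. mi_less g b} \<subseteq> {..<mi_rank b}"
  proof (rule image_subsetI)
    fix g assume "g \<in> {g. mi_less g b}"
    then show "mi_rank g \<in> {..<mi_rank b}" using mi_rank_less by simp
  qed
  have "card (mi_rank ` {g. mi_less g b}) = card {g. mi_less g b}"
    by (rule card_image) (use inj_mi_rank in \<open>auto intro: inj_on_subset\<close>)
  then show "card (mi_rank ` {g. mi_less g b}) = card {..<mi_rank b}" by (simp add: mi_rank_def)
qed simp

lemma mi_rank_surj: "\<exists>b. mi_rank b = i"
proof -
  have inf: "infinite (UNIV :: (nat \<times> nat) set)" by (simp add: finite_prod)
  have "infinite (range mi_rank)"
  proof
    assume "finite (range mi_rank)"
    then have "finite (UNIV :: (nat \<times> nat) set)" by (rule finite_imageD) (rule inj_mi_rank)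
    with inf show False by simp
  qed
  then obtain n where n: "n > i" "n \<in> range mi_rank" by (meson infinite_nat_iff_unbounded)
  then obtain b where "mi_rank b = n" by auto
  with n have "i \<in> mi_rank ` {g. mi_less g b}" using mi_rank_image_pred by auto
  then show ?thesis by auto
qed

lemma mi_rank_alpha: "mi_rank (alpha i) = i"
proof -
  obtain b where b: "mi_rank b = i" using mi_rank_surj by blast
  have "card {g. mi_less g (alpha i)} = i" unfolding alpha_def
  proof (rule theI[of "\<lambda>b. card {g. mi_less g b} = i" b])
    show "card {g. mi_less g b} = i" using b by (simp add: mi_rank_def)
    show "card {g. mi_less g y} = i \<Longrightarrow> y = b" for y
      using b inj_mi_rank by (metis injD mi_rank_def)
  qed
  then show ?thesis by (simp add: mi_rank_def)
qed

lemma alpha_mi_rank: "alpha (mi_rank b) = b"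
  using mi_rank_alpha inj_mi_rank by (metis injD)

lemma mi_less_alpha: "j < i \<Longrightarrow> mi_less (alpha j) (alpha i)"
proof -
  assume ji: "j < i"
  have "alpha j \<noteq> alpha i" using ji mi_rank_alpha by (metis less_irrefl)
  then have "mi_less (alpha j) (alpha i) \<or> mi_less (alpha i) (alpha j)" by (rule mi_less_total)
  moreover have "\<not> mi_less (alpha i) (alpha j)"
  proof
    assume "mi_less (alpha i) (alpha j)"
    then have "mi_rank (alpha i) < mi_rank (alpha j)" by (rule mi_rank_less)
    with ji show False by (simp add: mi_rank_alpha)
  qed
  ultimately show ?thesis by blast
qed

lemma mlen_alpha_mono: "j < i \<Longrightarrow> mlen (alpha j) \<le> mlen (alpha i)"
  using mi_less_alpha by (fastforce simp: mi_less_def)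

lemma alpha_neq: "j < i \<Longrightarrow> alpha j \<noteq> alpha i"
  using mi_less_alpha mi_less_irrefl by metis

lemma mi_rank_zero: "mi_rank (0,0) = 0"
proof -
  have "{g. mi_less g (0,0)} = {}" by (auto simp: mi_less_def mlen_def)
  then show ?thesis unfolding mi_rank_def by (metis card.empty)
qed

lemma deg_pos: "0 < i \<Longrightarrow> 1 \<le> deg i"
proof -
  assume i: "0 < i"
  have "alpha i \<noteq> (0,0)" using i by (metis mi_rank_alpha mi_rank_zero less_irrefl)
  then show ?thesis by (cases "alpha i") (auto simp: deg_def mlen_def)
qed

lemma strict_mono_mi_rank_diag: "strict_mono (\<lambda>N. mi_rank (Suc N, Suc N))"
  by (rule strict_monoI_Suc) (auto intro!: mi_rank_less simp: mi_less_def mlen_def)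

section \<open>Chebyshev constants of the unit ball\<close>

lemma sum_powers_root_of_unity:
  fixes M :: nat and d :: int
  assumes M: "0 < M" and d: "\<bar>d\<bar> < int M"
  shows "(\<Sum>k<M. cis (2*pi*d/M)^k) = (if d = 0 then of_nat M else 0)"
proof (cases "d = 0")
  case True then show ?thesis by simp
next
  case False
  define x where "x = cis (2*pi*d/M)"
  have xM: "x ^ M = 1"
  proof -
    have "x ^ M = cis (real M * (2*pi*d/M))" by (simp only: x_def Complex.DeMoivre)
    also have "real M * (2*pi*d/M) = 2 * pi * real_of_int d" using M by simp
    also have "cis (2 * pi * real_of_int d) = 1" by (rule cis_multiple_2pi) simp
    finally show ?thesis .
  qed
  have x1: "x \<noteq> 1"
  proof
    assume "x = 1"
    then have "cos (2*pi*d/M) = 1" unfolding x_def by (metis cis.sel(1) one_complex.sel(1))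
    then obtain k :: int where k: "2*pi*d/M = real_of_int k * 2 * pi" by (auto simp: cos_one_2pi_int)
    then have "real_of_int d = real_of_int k * real M" using M by (simp add: field_simps)
    then have dk: "d = k * int M" by (metis of_int_eq_iff of_int_mult of_int_of_nat_eq)
    have "k \<noteq> 0" using dk False by auto
    then have "int M \<le> \<bar>k\<bar> * int M" using M by (simp add: mult_le_cancel_right1)
    then show False using d dk by (simp add: abs_mult)
  qed
  have "(\<Sum>k<M. x^k) = (1 - x ^ M) / (1 - x)" using x1 by (simp add: sum_gp_strict)
  then show ?thesis using xM False by (simp add: x_def)
qed

lemma roots_of_unity_orthogonal:
  fixes M a p :: nat
  assumes M: "a < M" "p < M"
  shows "(\<Sum>k<M. cnj (cis (2*pi/M))^(k*a) * cis (2*pi/M)^(k*p)) = (if p = a then of_nat M else 0)"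
proof -
  have M0: "0 < M" using M by simp
  have "cnj (cis (2*pi/M))^(k*a) * cis (2*pi/M)^(k*p) = cis (2*pi*(int p - int a)/M)^k" for k
  proof -
    have "cnj (cis (2*pi/M))^(k*a) * cis (2*pi/M)^(k*p) = cis (real (k*a) * (- (2*pi/M)) + real (k*p) * (2*pi/M))"
      by (simp only: cis_cnj Complex.DeMoivre cis_mult)
    also have "real (k*a) * (- (2*pi/M)) + real (k*p) * (2*pi/M) = real k * (2*pi*(int p - int a)/M)"
      using M0 by (simp add: field_simps)
    finally show ?thesis by (simp add: Complex.DeMoivre)
  qed
  then have "(\<Sum>k<M. cnj (cis (2*pi/M))^(k*a) * cis (2*pi/M)^(k*p)) = (\<Sum>k<M. cis (2*pi*(int p - int a)/M)^k)"
    by simp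
  also have "\<dots> = (if int p - int a = 0 then of_nat M else 0)"
    by (rule sum_powers_root_of_unity[OF M0]) (use M in auto)
  finally show ?thesis by simp
qed

lemma unit_ball_components_le_1:
  assumes "z \<in> cball 0 1"
  shows "cmod (fst z) \<le> 1 \<and> cmod (snd z) \<le> 1"
proof -
  have "cmod (fst z) \<le> norm z" "cmod (snd z) \<le> norm z"
    by (metis norm_fst_le prod.collapse, metis norm_snd_le prod.collapse)
  with assms show ?thesis by auto
qed

lemma norm_monom_le_1: "z \<in> cball 0 1 \<Longrightarrow> cmod (monom b z) \<le> 1"
  using unit_ball_components_le_1[of z] by (simp add: monom_def norm_mult norm_power power_le_one mult_le_one)

lemma norm_Ppoly_le: "z \<in> cball 0 1 \<Longrightarrow> cmod (Ppoly i c z) \<le> 1 + (\<Sum>j<i. cmod (c j))"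
proof -
  assume z: "z \<in> cball 0 1"
  have "cmod (Ppoly i c z) \<le> cmod (monom (alpha i) z) + cmod (\<Sum>j<i. c j * monom (alpha j) z)"
    unfolding Ppoly_def by (rule norm_triangle_ineq)
  also have "\<dots> \<le> cmod (monom (alpha i) z) + (\<Sum>j<i. cmod (c j * monom (alpha j) z))"
    by (intro add_left_mono norm_sum)
  also have "\<dots> \<le> 1 + (\<Sum>j<i. cmod (c j))"
    using norm_monom_le_1[OF z] by (intro add_mono sum_mono) (auto simp: norm_mult mult_left_le)
  finally show ?thesis .
qed

lemma bdd_above_Ppoly: "bdd_above ((\<lambda>z. \<bar>cmod (Ppoly i c z)\<bar>) ` cball 0 1)"
  using norm_Ppoly_le by (intro bdd_aboveI2[where M="1 + (\<Sum>j<i. cmod (c j))"]) auto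

lemma bdd_above_monom: "bdd_above ((\<lambda>z. \<bar>cmod (monom b z)\<bar>) ` cball 0 1)"
  using norm_monom_le_1 by (intro bdd_aboveI2[where M=1]) auto

lemma unit_ball_nonempty: "cball (0::pt) 1 \<noteq> {}"
  by simp

text \<open>Averaging over the \<open>M\<close>-th roots of unity in each variable against the character
  \<open>(\<zeta>\<^sub>1, \<zeta>\<^sub>2) \<mapsto> \<zeta>\<^sub>1\<^sup>-\<^sup>p \<zeta>\<^sub>2\<^sup>-\<^sup>q\<close>: on polynomials of degree \<open>< M\<close> in each variable this
  extracts \<open>M\<^sup>2\<close> times the \<open>z\<^sub>1\<^sup>p z\<^sub>2\<^sup>q\<close> term.\<close>
definition torus_avg :: "nat \<Rightarrow> nat \<Rightarrow> nat \<Rightarrow> (pt \<Rightarrow> complex) \<Rightarrow> pt \<Rightarrow> complex" where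
  "torus_avg M p q f z = (\<Sum>k<M. \<Sum>l<M. cnj (cis (2*pi/M))^(k*p) * cnj (cis (2*pi/M))^(l*q) *
      f (cis (2*pi/M)^k * fst z, cis (2*pi/M)^l * snd z))"

lemma torus_avg_monom:
  assumes "a < M" "b < M" "p < M" "q < M"
  shows "torus_avg M p q (monom (a,b)) z = (if (a,b) = (p,q) then of_nat M * of_nat M * monom (a,b) z else 0)"
proof -
  define \<omega> where "\<omega> = cis (2*pi/M)"
  have "torus_avg M p q (monom (a,b)) z = (\<Sum>k<M. \<Sum>l<M. (cnj \<omega>^(k*p) * \<omega>^(k*a)) * ((cnj \<omega>^(l*q) * \<omega>^(l*b)) * monom (a,b) z))"
    unfolding torus_avg_def \<omega>_def[symmetric]
    by (intro sum.cong refl) (simp add: monom_def power_mult_distrib power_mult[symmetric] mult.commute mult.left_commute)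
  also have "\<dots> = (\<Sum>k<M. cnj \<omega>^(k*p) * \<omega>^(k*a)) * (\<Sum>l<M. cnj \<omega>^(l*q) * \<omega>^(l*b)) * monom (a,b) z"
    by (simp only: sum_product sum_distrib_right sum_distrib_left mult.assoc) (rule sum.swap)
  also have "(\<Sum>k<M. cnj \<omega>^(k*p) * \<omega>^(k*a)) = (if a = p then of_nat M else 0)"
    using roots_of_unity_orthogonal[of p M a] assms unfolding \<omega>_def by simp
  also have "(\<Sum>l<M. cnj \<omega>^(l*q) * \<omega>^(l*b)) = (if b = q then of_nat M else 0)"
    using roots_of_unity_orthogonal[of q M b] assms unfolding \<omega>_def by simp
  finally show ?thesis by auto
qed

lemma torus_avg_add: "torus_avg M p q (\<lambda>w. f w + g w) z = torus_avg M p q f z + torus_avg M p q g z"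
  by (simp add: torus_avg_def distrib_left sum.distrib)

lemma torus_avg_sum: "torus_avg M p q (\<lambda>w. \<Sum>j\<in>J. c j * f j w) z = (\<Sum>j\<in>J. c j * torus_avg M p q (f j) z)"
  unfolding torus_avg_def
  by (simp add: sum_distrib_left mult.commute mult.left_commute sum.swap[of _ J])

lemma torus_avg_Ppoly:
  assumes ai: "alpha i = (p,q)" and M: "M = p + q + 1"
  shows "torus_avg M p q (Ppoly i c) z = of_nat M * of_nat M * monom (p,q) z"
proof -
  have Pp: "Ppoly i c = (\<lambda>w. monom (alpha i) w + (\<Sum>j<i. c j * monom (alpha j) w))"
    by (simp add: Ppoly_def[abs_def])
  have zero: "torus_avg M p q (monom (alpha j)) z = 0" if j: "j < i" for j
  proof -
    obtain a b where ab: "alpha j = (a,b)" by fastforce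
    have "a + b \<le> p + q" using mlen_alpha_mono[OF j] ai ab by (simp add: mlen_def)
    moreover have "(a,b) \<noteq> (p,q)" using alpha_neq[OF j] ai ab by simp
    ultimately show ?thesis unfolding ab using M by (subst torus_avg_monom) auto
  qed
  show ?thesis unfolding Pp torus_avg_add torus_avg_sum using zero M ai by (simp add: torus_avg_monom)
qed

lemma norm_monom_le_supnorm_Ppoly:
  assumes ai: "alpha i = (p,q)" and z: "z \<in> cball 0 1"
  shows "cmod (monom (p,q) z) \<le> supnorm (cball 0 1) (\<lambda>z. cmod (Ppoly i c z))"
proof -
  define M where "M = p + q + 1"
  define \<omega> where "\<omega> = cis (2*pi/M)"
  define S where "S = supnorm (cball 0 1) (\<lambda>z. cmod (Ppoly i c z))"
  have M0: "0 < M" by (simp add: M_def)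
  have \<omega>1: "cmod \<omega> = 1" by (simp add: \<omega>_def)
  have pts: "(\<omega>^k * fst z, \<omega>^l * snd z) \<in> cball 0 1" for k l
    using z unfolding mem_unit_ball_pt by (simp add: \<omega>_def norm_mult norm_power)
  have leS: "cmod (Ppoly i c w) \<le> S" if "w \<in> cball 0 1" for w
    unfolding S_def supnorm_def using that
    by (metis (no_types, lifting) abs_norm_cancel bdd_above_Ppoly cSUP_upper)
  have "of_nat M * of_nat M * cmod (monom (p,q) z) = cmod (torus_avg M p q (Ppoly i c) z)"
    using torus_avg_Ppoly[OF ai M_def] by (simp add: norm_mult)
  also have "\<dots> \<le> (\<Sum>k<M. \<Sum>l<M. cmod (cnj \<omega>^(k*p) * cnj \<omega>^(l*q) * Ppoly i c (\<omega>^k * fst z, \<omega>^l * snd z)))"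
    unfolding torus_avg_def \<omega>_def[symmetric] by (rule order_trans[OF norm_sum sum_mono[OF norm_sum]])
  also have "\<dots> \<le> (\<Sum>k<M. \<Sum>l<M. S)"
    using leS[OF pts] by (intro sum_mono) (simp add: norm_mult norm_power \<omega>1)
  also have "\<dots> = of_nat M * of_nat M * S" by simp
  finally have "real M * real M * cmod (monom (p,q) z) \<le> real M * real M * S" by simp
  then show ?thesis using M0 by (simp add: S_def)
qed

lemma t_cheb_unit_ball: "t_cheb (cball 0 1) i = supnorm (cball 0 1) (\<lambda>z. cmod (monom (alpha i) z))"
proof -
  obtain p q where ai: "alpha i = (p,q)" by fastforce
  have ge: "supnorm (cball 0 1) (\<lambda>z. cmod (monom (alpha i) z)) \<le> supnorm (cball 0 1) (\<lambda>z. cmod (Ppoly i c z))" for c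
    unfolding supnorm_def[of _ "\<lambda>z. cmod (monom (alpha i) z)"]
    by (rule cSUP_least[OF unit_ball_nonempty]) (use norm_monom_le_supnorm_Ppoly[OF ai] ai in \<open>simp add: supnorm_def\<close>)
  have eq0: "Ppoly i (\<lambda>_. 0) = monom (alpha i)" by (simp add: Ppoly_def[abs_def])
  show ?thesis unfolding t_cheb_def
    by (rule cInf_eq_minimum) (use ge eq0 in \<open>auto intro: exI[of _ "\<lambda>_. 0"]\<close>)
qed

lemma supnorm_monom_ge: "(1 / sqrt 2) ^ (a + b) \<le> supnorm (cball 0 1) (\<lambda>z. cmod (monom (a,b) z))"
proof -
  define w0 where "w0 = (complex_of_real (1 / sqrt 2), complex_of_real (1 / sqrt 2))"
  have c: "cmod (complex_of_real (1 / sqrt 2)) = 1 / sqrt 2" by (simp only: norm_of_real) simp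
  have "(1 / sqrt 2::real)^2 = 1/2" by (simp add: power_divide)
  then have w0: "w0 \<in> cball 0 1" unfolding w0_def mem_unit_ball_pt by (simp only: c fst_conv snd_conv mem_Collect_eq)
  have "(1 / sqrt 2) ^ (a + b) = \<bar>cmod (monom (a,b) w0)\<bar>"
    by (simp add: w0_def monom_def norm_mult norm_power power_add norm_divide)
  also have "\<dots> \<le> supnorm (cball 0 1) (\<lambda>z. cmod (monom (a,b) z))"
    unfolding supnorm_def by (rule cSUP_upper[OF w0 bdd_above_monom])
  finally show ?thesis .
qed

lemma inverse_sqrt2_power_even: "(1 / sqrt 2 :: real) ^ (2 * N) = (1/2) ^ N"
proof -
  have "(1 / sqrt 2 :: real) ^ (2 * N) = ((1 / sqrt 2)^2) ^ N" by (simp only: power_mult)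
  also have "(1 / sqrt 2::real)^2 = 1/2" by (simp add: power_divide)
  finally show ?thesis .
qed

lemma supnorm_monom_diag: "supnorm (cball 0 1) (\<lambda>z. cmod (monom (N,N) z)) = (1/2) ^ N"
proof (rule antisym)
  show "supnorm (cball 0 1) (\<lambda>z. cmod (monom (N,N) z)) \<le> (1/2) ^ N"
    unfolding supnorm_def
  proof (rule cSUP_least[OF unit_ball_nonempty])
    fix z :: pt assume z: "z \<in> cball 0 1"
    have h: "(cmod (fst z))^2 + (cmod (snd z))^2 \<le> 1" using z unfolding mem_unit_ball_pt .
    have "0 \<le> (cmod (fst z) - cmod (snd z))^2" by simp
    then have "cmod (fst z) * cmod (snd z) \<le> 1/2" using h by (simp add: power2_eq_square algebra_simps)
    then have "(cmod (fst z) * cmod (snd z)) ^ N \<le> (1/2) ^ N" by (intro power_mono) auto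
    then show "\<bar>cmod (monom (N, N) z)\<bar> \<le> (1/2) ^ N"
      by (simp add: monom_def norm_mult norm_power power_mult_distrib)
  qed
  show "(1/2) ^ N \<le> supnorm (cball 0 1) (\<lambda>z. cmod (monom (N,N) z))"
    using supnorm_monom_ge[of N N] inverse_sqrt2_power_even[of N] by (simp add: mult_2[symmetric])
qed

lemma inverse_sqrt2_power_root: "0 < d \<Longrightarrow> ((1 / sqrt 2) ^ d) powr (1 / real d) = 1 / sqrt 2"
proof -
  assume d: "0 < d"
  have "((1 / sqrt 2 :: real) ^ d) = (1 / sqrt 2) powr real d" by (simp add: powr_realpow)
  then have "((1 / sqrt 2) ^ d) powr (1 / real d) = (1 / sqrt 2) powr (real d * (1 / real d))"
    by (simp add: powr_powr)
  also have "real d * (1 / real d) = 1" using d by simp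
  finally show ?thesis by simp
qed

lemma t_cheb_unit_ball_diag: "alpha i = (N, N) \<Longrightarrow> t_cheb (cball 0 1) i = (1/2) ^ N"
  by (simp add: t_cheb_unit_ball supnorm_monom_diag)

lemma t_cheb_root_ge:
  assumes i: "0 < i"
  shows "1 / sqrt 2 \<le> t_cheb (cball 0 1) i powr (1 / real (deg i))"
proof -
  obtain a b where ab: "alpha i = (a, b)" by fastforce
  have d: "deg i = a + b" by (simp add: deg_def ab mlen_def)
  have d0: "0 < deg i" using deg_pos[OF i] by simp
  have "(1 / sqrt 2) ^ deg i \<le> t_cheb (cball 0 1) i" using supnorm_monom_ge[of a b] by (simp add: t_cheb_unit_ball ab d)
  then have "((1 / sqrt 2) ^ deg i) powr (1 / real (deg i)) \<le> t_cheb (cball 0 1) i powr (1 / real (deg i))"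
    by (intro powr_mono2) auto
  then show ?thesis using inverse_sqrt2_power_root[OF d0] by simp
qed

lemma t_cheb_root_diag:
  assumes "alpha i = (N, N)" "1 \<le> N"
  shows "t_cheb (cball 0 1) i powr (1 / real (deg i)) = 1 / sqrt 2"
proof -
  have d: "deg i = 2 * N" using assms by (simp add: deg_def mlen_def)
  have "t_cheb (cball 0 1) i = (1 / sqrt 2) ^ (2 * N)" using t_cheb_unit_ball_diag[OF assms(1)] inverse_sqrt2_power_even by simp
  then show ?thesis using inverse_sqrt2_power_root[of "2*N"] assms(2) d by simp
qed

lemma tau_minus_unit_ball: "tau_minus (cball 0 1) = ereal (1 / sqrt 2)"
proof (rule antisym)
  define X where "X i = ereal (t_cheb (cball 0 1) i powr (1 / real (deg i)))" for i
  define r where "r N = mi_rank (Suc N, Suc N)" for N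
  have sm: "strict_mono r" using strict_mono_mi_rank_diag by (simp add: r_def[abs_def])
  have "(X \<circ> r) = (\<lambda>_. ereal (1 / sqrt 2))"
  proof
    fix N
    have "alpha (r N) = (Suc N, Suc N)" by (simp add: r_def alpha_mi_rank)
    then show "(X \<circ> r) N = ereal (1 / sqrt 2)" using t_cheb_root_diag[of "r N" "Suc N"] by (simp add: X_def)
  qed
  then have "liminf X \<le> ereal (1 / sqrt 2)"
    using liminf_subseq_mono[OF sm, of X] by (simp add: Liminf_const)
  then show "tau_minus (cball 0 1) \<le> ereal (1 / sqrt 2)" by (simp add: tau_minus_def X_def[abs_def])
  have "eventually (\<lambda>i. ereal (1 / sqrt 2) \<le> X i) sequentially"
    using eventually_gt_at_top[of 0] by eventually_elim (simp add: X_def t_cheb_root_ge)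
  then have "ereal (1 / sqrt 2) \<le> liminf X" by (rule Liminf_bounded)
  then show "ereal (1 / sqrt 2) \<le> tau_minus (cball 0 1)" by (simp add: tau_minus_def X_def[abs_def])
qed

theorem mainTheorem5:
  fixes K :: "(complex \<times> complex) set"
  assumes "K = {z. (cmod (fst z))\<^sup>2 + (cmod (snd z))\<^sup>2 \<le> 1}"
  shows "tau_minus K = ereal (1 / sqrt 2)
    \<and> cap_c K = ereal (1 / sqrt 2)
    \<and> cap_C K = 1
    \<and> (\<forall>i N. N \<ge> 1 \<and> alpha i = (N, N) \<longrightarrow>
          t_cheb K i = (1 / 2) ^ N \<and> widom_inf K (\<lambda>_. 1) i = 1)"
proof -
  have K: "K = cball 0 1" using assms unit_ball_pt by simp
  have "t_cheb K i = (1 / 2) ^ N \<and> widom_inf K (\<lambda>_. 1) i = 1" if "alpha i = (N, N)" for i N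
  proof
    show t_cheb: "t_cheb K i = (1 / 2) ^ N"
      using t_cheb_unit_ball_diag[OF that] K by simp
    have "t_weighted K (\<lambda>_. 1) i = t_cheb K i" by (simp add: t_weighted_def t_cheb_def)
    moreover have "deg i = 2 * N" using that by (simp add: deg_def mlen_def)
    ultimately show "widom_inf K (\<lambda>_. 1) i = 1"
      using t_cheb K tau_minus_unit_ball inverse_sqrt2_power_even[of N] by (simp add: widom_inf_def)
  qed
  then show ?thesis using K tau_minus_unit_ball cap_c_unit_ball cap_C_unit_ball by blast
qed

end
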